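(* Let $\alpha\in[0,1]$ be irrational, $n\geq 2$, and $\alpha_n=\frac{p_n}{q_n}$ the $n$-th rational approximant to $\alpha$. Let $k_0\in\mathbb{Z}$ with $q_{n-1}\ge|k_0|$ and set $\theta:=k_0\alpha\bmod 1$. Then for all $-q_n+1\le k\le q_n-2$: (a) if $k_0>0$ and $n$ is even, $v_{\alpha_n,\theta}(k)=v_{\alpha,\theta}(k)$; (b) if $k_0>0$ and $n$ is odd, $v_{\alpha_n,\theta}(k)=\widetilde v_{\alpha,\theta}(k)$; (c) if $k_0<0$ and $n$ is even, $v_{\alpha_n,\theta}(k)=\widetilde v_{\alpha,\theta}(k)$; (d) if $k_0<0$ and $n$ is odd, $v_{\alpha_n,\theta}(k)=v_{\alpha,\theta}(k)$.
   Context: For $\beta\in[0,1]$, $\theta\in[0,1)$: $v_{\beta,\theta}(k)=\chi_{[1-\beta,1)}(k\beta+\theta\bmod 1)$ and $\widetilde v_{\beta,\theta}(k)=\chi_{(1-\beta,1]\cup\{0\}}(k\beta+\theta\bmod 1)$. Rational approximants: for $\alpha=[a_1,a_2,\dots]$, $p_{-1}=1,p_0=0,p_n=a_np_{n-1}+p_{n-2}$, $q_{-1}=0,q_0=1,q_n=a_nq_{n-1}+q_{n-2}$, $\alpha_n=p_n/q_n$. *)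

theory Defs
  imports Complex_Main "HOL-Library.Indicator_Function"
begin

definition v_seq :: "real \<Rightarrow> real \<Rightarrow> int \<Rightarrow> real" where
  "v_seq \<beta> \<theta> k = indicator {1 - \<beta>..<1} (frac (real_of_int k * \<beta> + \<theta>))"

definition vt_seq :: "real \<Rightarrow> real \<Rightarrow> int \<Rightarrow> real" where
  "vt_seq \<beta> \<theta> k = indicator ({1 - \<beta><..1} \<union> {0}) (frac (real_of_int k * \<beta> + \<theta>))"

text \<open>Continued fraction expansion alpha = [a_1, a_2, ...] via the Gauss map:
  cf_rem alpha n is the n-th remainder, a_n = floor (1 / cf_rem alpha (n-1)).\<close>
fun cf_rem :: "real \<Rightarrow> nat \<Rightarrow> real" where
  "cf_rem \<alpha> 0 = \<alpha>"
| "cf_rem \<alpha> (Suc n) = frac (1 / cf_rem \<alpha> n)"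

definition cf_a :: "real \<Rightarrow> nat \<Rightarrow> int" where
  "cf_a \<alpha> n = \<lfloor>1 / cf_rem \<alpha> (n - 1)\<rfloor>"

text \<open>p_n, q_n for n >= 0 (p_{-1}=1, q_{-1}=0 built into the n=1 step).\<close>
fun cf_p :: "real \<Rightarrow> nat \<Rightarrow> int" where
  "cf_p \<alpha> 0 = 0"
| "cf_p \<alpha> (Suc 0) = cf_a \<alpha> 1 * 0 + 1"
| "cf_p \<alpha> (Suc (Suc n)) = cf_a \<alpha> (n + 2) * cf_p \<alpha> (Suc n) + cf_p \<alpha> n"

fun cf_q :: "real \<Rightarrow> nat \<Rightarrow> int" where
  "cf_q \<alpha> 0 = 1"
| "cf_q \<alpha> (Suc 0) = cf_a \<alpha> 1 * 1 + 0"
| "cf_q \<alpha> (Suc (Suc n)) = cf_a \<alpha> (n + 2) * cf_q \<alpha> (Suc n) + cf_q \<alpha> n"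

definition cf_approx :: "real \<Rightarrow> nat \<Rightarrow> real" where
  "cf_approx \<alpha> n = real_of_int (cf_p \<alpha> n) / real_of_int (cf_q \<alpha> n)"

end

(*
  Let alpha = (p_n + p_{n-1} t) / (q_n + q_{n-1} t), t being the n-th remainder of the continued
  fraction.  As p_n q_{n-1} - p_{n-1} q_n = (-1)^(n-1), alpha lies strictly between the Farey
  neighbours p_n/q_n and p_{n-1}/q_{n-1}, on the side of alpha_n fixed by the parity of n, and
  |alpha - alpha_n| < 1/(q_n q_{n-1}).

  v and v~ are first differences of the floor resp. ceiling of m beta + theta.  For theta = k0 alpha
  (mod 1) and j = m + k0 we have m alpha_n + k0 alpha = j alpha_n + e with e = k0 (alpha - alpha_n)
  and 0 < |e| < 1/q_n.  A shift below 1/q_n cannot carry the fraction j alpha_n across an integer,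
  so the floor of j alpha_n + e is floor (j alpha_n) if e > 0 and ceiling (j alpha_n) - 1 if e < 0;
  the sign of e is that of k0 (-1)^n.  Finally j alpha_n may be replaced by j alpha: an integer
  strictly between them would give a fraction c/j strictly between the two Farey neighbours,
  forcing |j| >= q_n + q_{n-1}; and if j alpha_n is itself an integer then q_n divides j, so j has
  the sign of k0 and j alpha lies on the same side of j alpha_n as j alpha_n + e.
*)

theory Submission
  imports Defs
begin

lemma mult_irrational_notin_Ints:
  fixes x :: real
  assumes "x \<notin> \<rat>" "j \<noteq> 0"
  shows "of_int j * x \<notin> \<int>"
proof
  assume "of_int j * x \<in> \<int>"
  then obtain c where "of_int j * x = of_int c" by (elim Ints_cases)
  then have "x = of_int c / of_int j" using assms(2) by (simp add: field_simps)
  then show False using assms(1) by simp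
qed

lemma small_or_same_sign:
  fixes m k0 Q :: int and x :: real
  assumes "\<bar>m\<bar> < Q" "0 < k0 * x"
  shows "\<bar>m + k0\<bar> < Q \<or> 0 < (m + k0) * x"
  using assms by (cases "0 < k0") (auto simp: zero_less_mult_iff)

lemma dist_int_fraction_ge:
  fixes a c Q :: int
  assumes "0 < Q" "of_int a / of_int Q \<noteq> (of_int c :: real)"
  shows "1 / of_int Q \<le> \<bar>of_int c - of_int a / (of_int Q :: real)\<bar>"
proof -
  have "c * Q \<noteq> a" using assms by (auto simp: field_simps)
  then have "1 \<le> \<bar>real_of_int (c * Q - a)\<bar>" by linarith
  also have "\<dots> = \<bar>of_int c - of_int a / of_int Q\<bar> * of_int Q"
    using assms(1) by (simp add: abs_mult field_simps)
  finally show ?thesis using assms(1) by (simp add: field_simps)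
qed

lemma floor_fraction_add_small:
  fixes a Q :: int and e :: real
  assumes "0 < Q" "0 \<le> e" "e < 1 / Q"
  shows "\<lfloor>a / Q + e\<rfloor> = \<lfloor>a / Q\<rfloor>"
proof -
  have less: "a / Q < of_int \<lfloor>a / Q\<rfloor> + 1" by linarith
  have "1 / Q \<le> \<bar>of_int (\<lfloor>a / Q\<rfloor> + 1) - a / Q\<bar>"
    by (rule dist_int_fraction_ge[OF assms(1)]) (use less in linarith)
  with less have "a / Q + 1 / Q \<le> \<lfloor>a / Q\<rfloor> + 1" by simp
  then show ?thesis using assms of_int_floor_le[of "a / Q"] by (simp add: floor_eq_iff) linarith
qed

lemma floor_fraction_add_small_neg:
  fixes a Q :: int and e :: real
  assumes "0 < Q" "e < 0" "- (1 / Q) < e"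
  shows "\<lfloor>a / Q + e\<rfloor> = \<lceil>a / Q\<rceil> - 1"
proof -
  have less: "of_int \<lceil>a / Q\<rceil> - 1 < a / Q" by linarith
  have "1 / Q \<le> \<bar>of_int (\<lceil>a / Q\<rceil> - 1) - a / Q\<bar>"
    by (rule dist_int_fraction_ge[OF assms(1)]) (use less in linarith)
  with less have "\<lceil>a / Q\<rceil> - 1 \<le> a / Q - 1 / Q" by simp
  then show ?thesis using assms le_of_int_ceiling[of "a / Q"] by (simp add: floor_eq_iff) linarith
qed

(* (c - x) * (c - y) < 0 says that c lies strictly between x and y. *)
lemma floor_eq_if_no_integer_between:
  fixes x y :: real
  assumes between: "\<And>c::int. \<not> (of_int c - x) * (of_int c - y) < 0"
    and "y \<notin> \<int>" and "x \<le> y \<or> x \<notin> \<int>"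
  shows "\<lfloor>x\<rfloor> = \<lfloor>y\<rfloor>"
proof (rule ccontr)
  have floor_less: "of_int \<lfloor>z\<rfloor> < z" if "z \<notin> \<int>" for z :: real
    using that frac_gt_0_iff[of z] by (simp add: frac_def)
  assume "\<lfloor>x\<rfloor> \<noteq> \<lfloor>y\<rfloor>"
  then consider "\<lfloor>x\<rfloor> < \<lfloor>y\<rfloor>" | "\<lfloor>y\<rfloor> < \<lfloor>x\<rfloor>" by linarith
  then show False
  proof cases
    case 1
    then have "x < \<lfloor>y\<rfloor>" by (simp add: floor_less_iff)
    moreover have "\<lfloor>y\<rfloor> < y" using floor_less \<open>y \<notin> \<int>\<close> by blast
    ultimately show False using between[of "\<lfloor>y\<rfloor>"] by (simp add: mult_pos_neg)
  next
    case 2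
    then have "y < \<lfloor>x\<rfloor>" by (simp add: floor_less_iff)
    moreover have "\<not> x \<le> y" using 2 floor_mono[of x y] by linarith
    then have "\<lfloor>x\<rfloor> < x" using floor_less assms(3) by blast
    ultimately show False using between[of "\<lfloor>x\<rfloor>"] by (simp add: mult_neg_pos)
  qed
qed

lemma ceiling_eq_if_no_integer_between:
  fixes x y :: real
  assumes "\<And>c::int. \<not> (of_int c - x) * (of_int c - y) < 0"
    and "y \<notin> \<int>" and "y \<le> x \<or> x \<notin> \<int>"
  shows "\<lceil>x\<rceil> = \<lceil>y\<rceil>"
proof -
  have "\<lfloor>- x\<rfloor> = \<lfloor>- y\<rfloor>"
  proof (rule floor_eq_if_no_integer_between)
    show "\<not> (of_int c - - x) * (of_int c - - y) < 0" for c :: int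
      using assms(1)[of "- c"] by (simp add: algebra_simps)
    show "- y \<notin> \<int>" "- x \<le> - y \<or> - x \<notin> \<int>" using assms(2,3) by simp_all
  qed
  then show ?thesis by (simp add: ceiling_def)
qed

lemma strictly_between_trans:
  fixes x y z c :: real
  assumes "(c - x) * (c - y) < 0" "0 < (x - y) * (y - z)"
  shows "0 < (x - c) * (c - z)"
  using assms by (auto simp: mult_less_0_iff zero_less_mult_iff)

lemma v_seq_frac_shift: "v_seq \<beta> (frac \<theta>) = v_seq \<beta> \<theta>"
  by (simp add: v_seq_def fun_eq_iff)

lemma vt_seq_frac_shift: "vt_seq \<beta> (frac \<theta>) = vt_seq \<beta> \<theta>"
  by (simp add: vt_seq_def fun_eq_iff)

lemma v_seq_eq_floor_diff:
  assumes "0 \<le> \<beta>" "\<beta> \<le> 1"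
  shows "v_seq \<beta> \<theta> k = \<lfloor>(k + 1) * \<beta> + \<theta>\<rfloor> - \<lfloor>k * \<beta> + \<theta>\<rfloor>"
proof -
  define y where "y = k * \<beta> + \<theta>"
  have "(k + 1) * \<beta> + \<theta> = (frac y + \<beta>) + \<lfloor>y\<rfloor>"
    unfolding y_def frac_def by (simp add: algebra_simps)
  then have "\<lfloor>(k + 1) * \<beta> + \<theta>\<rfloor> - \<lfloor>y\<rfloor> = \<lfloor>frac y + \<beta>\<rfloor>"
    by simp
  moreover have "\<lfloor>frac y + \<beta>\<rfloor> = (if frac y \<in> {1 - \<beta>..<1} then 1 else 0)"
    using assms frac_lt_1[of y] frac_ge_0[of y] by (auto simp: floor_eq_iff)
  ultimately show ?thesis by (simp add: v_seq_def y_def)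
qed

lemma vt_seq_eq_ceiling_diff:
  assumes "0 < \<beta>" "\<beta> \<le> 1"
  shows "vt_seq \<beta> \<theta> k = \<lceil>(k + 1) * \<beta> + \<theta>\<rceil> - \<lceil>k * \<beta> + \<theta>\<rceil>"
proof -
  define y where "y = k * \<beta> + \<theta>"
  have "(k + 1) * \<beta> + \<theta> = (frac y + \<beta>) + \<lfloor>y\<rfloor>"
    unfolding y_def frac_def by (simp add: algebra_simps)
  moreover have "\<lceil>y\<rceil> = \<lceil>frac y\<rceil> + \<lfloor>y\<rfloor>" by (simp add: frac_def)
  ultimately have "\<lceil>(k + 1) * \<beta> + \<theta>\<rceil> - \<lceil>y\<rceil> = \<lceil>frac y + \<beta>\<rceil> - \<lceil>frac y\<rceil>"
    by simp
  moreover have "\<lceil>frac y + \<beta>\<rceil> - \<lceil>frac y\<rceil> = (if frac y \<in> {1 - \<beta><..1} \<union> {0} then 1 else 0)"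
  proof (cases "frac y = 0")
    case True
    then show ?thesis using assms by (simp add: ceiling_eq_iff del: frac_eq_0_iff)
  next
    case False
    then have "\<lceil>frac y\<rceil> = 1" using frac_lt_1[of y] frac_ge_0[of y] by (simp add: ceiling_eq_iff)
    moreover have "\<lceil>frac y + \<beta>\<rceil> = (if 1 < frac y + \<beta> then 2 else 1)"
      using False assms frac_lt_1[of y] add_nonneg_pos[OF frac_ge_0 assms(1)]
      by (simp add: ceiling_eq_iff)
    ultimately show ?thesis using False frac_lt_1[of y] by auto
  qed
  ultimately show ?thesis by (simp add: vt_seq_def y_def)
qed

lemma cf_rem_irrational:
  assumes "\<alpha> \<notin> \<rat>"
  shows "cf_rem \<alpha> i \<notin> \<rat>"
  using assms
  by (induction i) (auto simp: Rats_inverse_iff[of "cf_rem \<alpha> _", unfolded inverse_eq_divide])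

lemma cf_rem_bounds:
  assumes "\<alpha> \<notin> \<rat>" "0 < \<alpha>" "\<alpha> < 1"
  shows "0 < cf_rem \<alpha> i" "cf_rem \<alpha> i < 1"
proof -
  have "0 < cf_rem \<alpha> i \<and> cf_rem \<alpha> i < 1"
  proof (cases i)
    case (Suc j)
    have "1 / cf_rem \<alpha> j \<notin> \<int>"
      using cf_rem_irrational[OF assms(1), of j] Ints_subset_Rats
      by (auto simp: Rats_inverse_iff[of "cf_rem \<alpha> j", unfolded inverse_eq_divide])
    then show ?thesis by (simp add: Suc frac_lt_1)
  qed (use assms in simp)
  then show "0 < cf_rem \<alpha> i" "cf_rem \<alpha> i < 1" by simp_all
qed

lemma inverse_cf_rem: "1 / cf_rem \<alpha> i = cf_a \<alpha> (Suc i) + cf_rem \<alpha> (Suc i)"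
  by (simp add: cf_a_def frac_def)

lemma cf_a_ge_1:
  assumes "\<alpha> \<notin> \<rat>" "0 < \<alpha>" "\<alpha> < 1" "1 \<le> i"
  shows "1 \<le> cf_a \<alpha> i"
  using cf_rem_bounds[OF assms(1-3), of "i - 1"] assms(4)
  by (simp add: cf_a_def le_floor_iff)

lemma cf_q_pos:
  assumes "\<alpha> \<notin> \<rat>" "0 < \<alpha>" "\<alpha> < 1"
  shows "0 < cf_q \<alpha> i"
  using assms
proof (induction \<alpha> i rule: cf_q.induct)
  case (3 \<alpha> j)
  have "1 * 1 \<le> cf_a \<alpha> (j + 2) * cf_q \<alpha> (Suc j)"
    using 3 cf_a_ge_1[OF "3.prems", of "j + 2"] by (intro mult_mono) simp_all
  then show ?case using 3 by simp
qed (use cf_a_ge_1[where i = 1] in fastforce)+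

lemma cf_det: "cf_p \<alpha> (Suc i) * cf_q \<alpha> i - cf_p \<alpha> i * cf_q \<alpha> (Suc i) = (-1) ^ i"
  by (induction i) (simp_all add: algebra_simps)

lemma cf_expansion:
  assumes "\<alpha> \<notin> \<rat>"
  shows "\<alpha> = (cf_p \<alpha> (Suc i) + cf_p \<alpha> i * cf_rem \<alpha> (Suc i)) /
             (cf_q \<alpha> (Suc i) + cf_q \<alpha> i * cf_rem \<alpha> (Suc i))"
proof (induction i)
  case 0
  have "\<alpha> = 1 / (1 / cf_rem \<alpha> 0)" by simp
  then show ?case unfolding inverse_cf_rem by (simp add: add.commute)
next
  case (Suc i)
  define X where "X = cf_a \<alpha> (Suc (Suc i)) + cf_rem \<alpha> (Suc (Suc i))"
  have "cf_rem \<alpha> (Suc i) \<noteq> 0" using cf_rem_irrational[OF assms] by (metis Rats_0)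
  then have X: "X \<noteq> 0" "cf_rem \<alpha> (Suc i) = 1 / X"
    using inverse_cf_rem[of \<alpha> "Suc i"] by (auto simp: X_def)
  have "\<alpha> = (cf_p \<alpha> (Suc i) + cf_p \<alpha> i * (1 / X)) / (cf_q \<alpha> (Suc i) + cf_q \<alpha> i * (1 / X))"
    using Suc.IH unfolding X(2) .
  also have "\<dots> = (cf_p \<alpha> (Suc i) * X + cf_p \<alpha> i) / (cf_q \<alpha> (Suc i) * X + cf_q \<alpha> i)"
    using X(1) by (simp add: divide_simps)
  finally show ?case by (simp add: X_def algebra_simps)
qed

locale unimodular_pair =
  fixes P Q P' Q' :: int
  assumes Q_pos: "0 < Q" and Q'_pos: "0 < Q'"
    and unimodular: "\<bar>P * Q' - P' * Q\<bar> = 1"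
begin

lemma denominator_bound_between:
  assumes "0 < (j * P - c * Q) * (c * Q' - j * P')"
  shows "Q + Q' \<le> \<bar>j\<bar>"
proof -
  define a where "a = j * P - c * Q"
  define b where "b = c * Q' - j * P'"
  have "j * (P * Q' - P' * Q) = Q' * a + Q * b" by (simp add: a_def b_def algebra_simps)
  then have "\<bar>j\<bar> = \<bar>Q' * a + Q * b\<bar>" using unimodular by (metis abs_mult mult.right_neutral)
  also have "\<dots> = Q' * \<bar>a\<bar> + Q * \<bar>b\<bar>"
    using assms Q_pos Q'_pos unfolding a_def[symmetric] b_def[symmetric]
    by (auto simp: zero_less_mult_iff abs_mult abs_of_neg add_neg_neg mult_pos_neg)
  finally have "\<bar>j\<bar> = Q' * \<bar>a\<bar> + Q * \<bar>b\<bar>" .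
  moreover have "1 \<le> \<bar>a\<bar>" "1 \<le> \<bar>b\<bar>"
    using assms unfolding a_def[symmetric] b_def[symmetric] by (auto simp: zero_less_mult_iff)
  ultimately show ?thesis
    using Q_pos Q'_pos mult_left_mono[of 1 "\<bar>a\<bar>" Q'] mult_left_mono[of 1 "\<bar>b\<bar>" Q] by linarith
qed

lemma mult_fraction_notin_Ints:
  assumes "j \<noteq> 0" "\<bar>j\<bar> < Q"
  shows "of_int j * (of_int P / of_int Q :: real) \<notin> \<int>"
proof
  assume "of_int j * (of_int P / of_int Q :: real) \<in> \<int>"
  then obtain c where "of_int j * (of_int P / of_int Q :: real) = of_int c" by (elim Ints_cases)
  then have "j * P = c * Q" using Q_pos by (simp add: field_simps flip: of_int_mult)
  then have "j * (P * Q' - P' * Q) = Q * (c * Q' - j * P')" by (simp add: algebra_simps)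
  then have "Q dvd j * (P * Q' - P' * Q)" by simp
  then have "Q dvd j" using unimodular by (simp add: dvd_mult_unit_iff)
  then show False using assms Q_pos by (auto dest: dvd_imp_le_int)
qed

end

(* P/Q = p_n/q_n and P'/Q' = p_{n-1}/q_{n-1} are consecutive convergents of alpha, t its n-th remainder. *)
locale cf_tail = unimodular_pair +
  fixes t \<alpha> :: real
  assumes t_pos: "0 < t" and \<alpha>_eq: "\<alpha> = (P + P' * t) / (Q + Q' * t)"
begin

lemma tail_denominator_pos: "0 < Q + Q' * t"
  using Q_pos Q'_pos t_pos by (simp add: add_pos_pos)

lemma approx_diff: "P / Q - \<alpha> = of_int (P * Q' - P' * Q) * (t / (Q * (Q + Q' * t)))"
  using Q_pos tail_denominator_pos unfolding \<alpha>_eq by (simp add: divide_simps) (simp add: algebra_simps)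

lemma prev_approx_diff: "\<alpha> - P' / Q' = of_int (P * Q' - P' * Q) * (1 / (Q' * (Q + Q' * t)))"
  using Q'_pos tail_denominator_pos unfolding \<alpha>_eq by (simp add: divide_simps) (simp add: algebra_simps)

lemma det_cases: "of_int (P * Q' - P' * Q) = (1::real) \<or> of_int (P * Q' - P' * Q) = (-1::real)"
proof -
  have "P * Q' - P' * Q = 1 \<or> P * Q' - P' * Q = -1" using unimodular by arith
  then show ?thesis by (elim disjE) simp_all
qed

lemma sgn_approx_diff: "sgn (P / Q - \<alpha>) = of_int (P * Q' - P' * Q)"
proof -
  have "sgn (t / (Q * (Q + Q' * t))) = 1" using Q_pos tail_denominator_pos t_pos by simp
  with det_cases show ?thesis unfolding approx_diff by (auto simp: sgn_mult)
qed

lemma approx_dist: "\<bar>\<alpha> - P / Q\<bar> < 1 / (Q * Q')"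
proof -
  have "\<bar>t / (Q * (Q + Q' * t))\<bar> = t / (Q * (Q + Q' * t))"
    using Q_pos tail_denominator_pos t_pos by simp
  with det_cases have "\<bar>P / Q - \<alpha>\<bar> = t / (Q * (Q + Q' * t))"
    unfolding approx_diff by (auto simp: abs_mult)
  also have "\<dots> < 1 / (Q * Q')"
    using Q_pos Q'_pos t_pos tail_denominator_pos by (simp add: divide_simps)
  finally show ?thesis by (simp add: abs_minus_commute)
qed

lemma approx_strictly_between: "0 < (P / Q - \<alpha>) * (\<alpha> - P' / Q')"
proof -
  have "0 < t / (Q * (Q + Q' * t)) * (1 / (Q' * (Q + Q' * t)))"
    using Q_pos Q'_pos t_pos tail_denominator_pos by simp
  with det_cases show ?thesis unfolding approx_diff prev_approx_diff by auto
qed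

lemma no_integer_between_multiples:
  assumes "j \<noteq> 0" "\<bar>j\<bar> < Q + Q'"
  shows "\<not> (of_int c - j * (P / Q)) * (of_int c - j * \<alpha>) < 0"
proof
  assume between: "(of_int c - j * (P / Q)) * (of_int c - j * \<alpha>) < 0"
  have "(j * (P / Q) - j * \<alpha>) * (j * \<alpha> - j * (P' / Q')) = j\<^sup>2 * ((P / Q - \<alpha>) * (\<alpha> - P' / Q'))"
    by (simp add: power2_eq_square algebra_simps)
  also have "0 < \<dots>" using assms(1) approx_strictly_between by simp
  finally have "0 < (j * (P / Q) - c) * (c - j * (P' / Q'))"
    using between strictly_between_trans by blast
  moreover have "of_int ((j * P - c * Q) * (c * Q' - j * P')) = (j * (P / Q) - c) * (c - j * (P' / Q')) * (Q * Q')"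
    using Q_pos Q'_pos by (simp add: field_simps)
  ultimately have "0 < real_of_int ((j * P - c * Q) * (c * Q' - j * P'))"
    using Q_pos Q'_pos by simp
  then have "0 < (j * P - c * Q) * (c * Q' - j * P')"
    by (simp only: of_int_0_less_iff)
  then have "Q + Q' \<le> \<bar>j\<bar>"
    by (rule denominator_bound_between)
  then show False using assms(2) by simp
qed

lemma floor_mult_approx_eq:
  assumes "\<alpha> \<notin> \<rat>" "j \<noteq> 0" "\<bar>j\<bar> < Q + Q'" "\<bar>j\<bar> < Q \<or> 0 < j * (\<alpha> - P / Q)"
  shows "\<lfloor>j * (P / Q)\<rfloor> = \<lfloor>j * \<alpha>\<rfloor>"
proof (rule floor_eq_if_no_integer_between)
  show "\<not> (of_int c - j * (P / Q)) * (of_int c - j * \<alpha>) < 0" for c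
    by (rule no_integer_between_multiples[OF assms(2,3)])
  show "j * \<alpha> \<notin> \<int>" by (rule mult_irrational_notin_Ints[OF assms(1,2)])
  show "j * (P / Q) \<le> j * \<alpha> \<or> j * (P / Q) \<notin> \<int>"
    using assms(4) mult_fraction_notin_Ints[OF assms(2)] by (auto simp: right_diff_distrib)
qed

lemma ceiling_mult_approx_eq:
  assumes "\<alpha> \<notin> \<rat>" "j \<noteq> 0" "\<bar>j\<bar> < Q + Q'" "\<bar>j\<bar> < Q \<or> j * (\<alpha> - P / Q) < 0"
  shows "\<lceil>j * (P / Q)\<rceil> = \<lceil>j * \<alpha>\<rceil>"
proof (rule ceiling_eq_if_no_integer_between)
  show "\<not> (of_int c - j * (P / Q)) * (of_int c - j * \<alpha>) < 0" for c
    by (rule no_integer_between_multiples[OF assms(2,3)])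
  show "j * \<alpha> \<notin> \<int>" by (rule mult_irrational_notin_Ints[OF assms(1,2)])
  show "j * \<alpha> \<le> j * (P / Q) \<or> j * (P / Q) \<notin> \<int>"
    using assms(4) mult_fraction_notin_Ints[OF assms(2)] by (auto simp: right_diff_distrib)
qed

lemma approx_bounds:
  assumes "0 \<le> \<alpha>" "\<alpha> \<le> 1"
  shows "0 \<le> P / Q" "P / Q \<le> 1"
proof -
  have "1 / (Q * Q') \<le> 1 / Q" using Q_pos Q'_pos by (simp add: divide_simps)
  then have "\<bar>\<alpha> - P / Q\<bar> * Q < 1" using approx_dist Q_pos by (simp add: field_simps)
  then have "\<bar>\<alpha> * Q - P\<bar> < 1" using Q_pos by (simp add: abs_mult field_simps)
  moreover have "0 \<le> \<alpha> * Q" "\<alpha> * Q \<le> Q"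
    using assms Q_pos by (simp_all add: mult_left_le_one_le)
  ultimately have "-1 < real_of_int P" "real_of_int P < Q + 1"
    unfolding abs_less_iff by linarith+
  then have "0 \<le> P" "P \<le> Q" by linarith+
  then show "0 \<le> P / Q" "P / Q \<le> 1" using Q_pos by simp_all
qed

lemma approx_error_mult_less:
  assumes "\<bar>k0\<bar> \<le> Q'"
  shows "\<bar>k0 * (\<alpha> - P / Q)\<bar> < 1 / Q"
proof -
  have "\<bar>k0 * (\<alpha> - P / Q)\<bar> \<le> Q' * \<bar>\<alpha> - P / Q\<bar>"
    using assms by (simp add: abs_mult mult_right_mono)
  also have "\<dots> < Q' * (1 / (Q * Q'))"
    using approx_dist Q'_pos by (intro mult_strict_left_mono) simp_all
  also have "\<dots> = 1 / Q" using Q'_pos by simp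
  finally show ?thesis .
qed

lemma floor_approx_shift_eq_floor:
  assumes "\<alpha> \<notin> \<rat>" "\<bar>k0\<bar> \<le> Q'" "0 < k0 * (\<alpha> - P / Q)" "\<bar>m\<bar> < Q"
  shows "\<lfloor>m * (P / Q) + k0 * \<alpha>\<rfloor> = \<lfloor>m * \<alpha> + k0 * \<alpha>\<rfloor>"
proof -
  define j where "j = m + k0"
  have "m * (P / Q) + k0 * \<alpha> = of_int (j * P) / Q + k0 * (\<alpha> - P / Q)"
    by (simp add: j_def algebra_simps add_divide_distrib)
  also have "\<lfloor>\<dots>\<rfloor> = \<lfloor>of_int (j * P) / Q\<rfloor>"
    by (rule floor_fraction_add_small[OF Q_pos])
      (use approx_error_mult_less[OF assms(2)] assms(3) in \<open>simp_all add: abs_less_iff\<close>)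
  also have "\<dots> = \<lfloor>j * (P / Q)\<rfloor>" by simp
  also have "\<dots> = \<lfloor>j * \<alpha>\<rfloor>"
  proof (cases "j = 0")
    case False
    have "\<bar>j\<bar> < Q + Q'" using assms(2,4) by (simp add: j_def)
    moreover have "\<bar>j\<bar> < Q \<or> 0 < j * (\<alpha> - P / Q)"
      unfolding j_def by (rule small_or_same_sign[OF assms(4,3)])
    ultimately show ?thesis by (rule floor_mult_approx_eq[OF assms(1) False])
  qed simp
  finally show ?thesis by (simp add: j_def algebra_simps)
qed

lemma floor_approx_shift_eq_ceiling:
  assumes "\<alpha> \<notin> \<rat>" "\<bar>k0\<bar> \<le> Q'" "k0 * (\<alpha> - P / Q) < 0" "\<bar>m\<bar> < Q"
  shows "\<lfloor>m * (P / Q) + k0 * \<alpha>\<rfloor> = \<lceil>m * \<alpha> + k0 * \<alpha>\<rceil> - 1"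
proof -
  define j where "j = m + k0"
  have "m * (P / Q) + k0 * \<alpha> = of_int (j * P) / Q + k0 * (\<alpha> - P / Q)"
    by (simp add: j_def algebra_simps add_divide_distrib)
  also have "\<lfloor>\<dots>\<rfloor> = \<lceil>of_int (j * P) / Q\<rceil> - 1"
    by (rule floor_fraction_add_small_neg[OF Q_pos])
      (use approx_error_mult_less[OF assms(2)] assms(3) in \<open>simp_all add: abs_less_iff\<close>)
  also have "\<lceil>of_int (j * P) / Q\<rceil> = \<lceil>j * (P / Q)\<rceil>" by simp
  also have "\<dots> = \<lceil>j * \<alpha>\<rceil>"
  proof (cases "j = 0")
    case False
    have "\<bar>j\<bar> < Q + Q'" using assms(2,4) by (simp add: j_def)
    moreover have "0 < k0 * (P / Q - \<alpha>)" using assms(3) by (simp add: right_diff_distrib)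
    then have "\<bar>j\<bar> < Q \<or> 0 < j * (P / Q - \<alpha>)"
      unfolding j_def by (rule small_or_same_sign[OF assms(4)])
    then have "\<bar>j\<bar> < Q \<or> j * (\<alpha> - P / Q) < 0" by (simp add: right_diff_distrib)
    ultimately show ?thesis by (rule ceiling_mult_approx_eq[OF assms(1) False])
  qed simp
  finally show ?thesis by (simp add: j_def algebra_simps)
qed

lemma v_seq_approx_eq_v_seq:
  assumes "\<alpha> \<notin> \<rat>" "0 \<le> \<alpha>" "\<alpha> \<le> 1" "\<bar>k0\<bar> \<le> Q'" "0 < k0 * (\<alpha> - P / Q)"
    and "\<bar>k\<bar> < Q" "\<bar>k + 1\<bar> < Q"
  shows "v_seq (P / Q) (k0 * \<alpha>) k = v_seq \<alpha> (k0 * \<alpha>) k"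
  using floor_approx_shift_eq_floor[OF assms(1,4,5,6)] floor_approx_shift_eq_floor[OF assms(1,4,5,7)]
  by (simp add: v_seq_eq_floor_diff approx_bounds assms(2,3))

lemma v_seq_approx_eq_vt_seq:
  assumes "\<alpha> \<notin> \<rat>" "0 < \<alpha>" "\<alpha> \<le> 1" "\<bar>k0\<bar> \<le> Q'" "k0 * (\<alpha> - P / Q) < 0"
    and "\<bar>k\<bar> < Q" "\<bar>k + 1\<bar> < Q"
  shows "v_seq (P / Q) (k0 * \<alpha>) k = vt_seq \<alpha> (k0 * \<alpha>) k"
  using floor_approx_shift_eq_ceiling[OF assms(1,4,5,6)] floor_approx_shift_eq_ceiling[OF assms(1,4,5,7)]
  by (simp add: v_seq_eq_floor_diff vt_seq_eq_ceiling_diff approx_bounds less_imp_le assms(2,3))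

end

theorem lemma4p9:
  fixes \<alpha> \<theta> :: real and n :: nat and k0 k :: int
  assumes "0 \<le> \<alpha>" "\<alpha> \<le> 1" "\<alpha> \<notin> \<rat>"
    and "n \<ge> 2"
    and "cf_q \<alpha> (n - 1) \<ge> \<bar>k0\<bar>"
    and "\<theta> = frac (real_of_int k0 * \<alpha>)"
    and "- cf_q \<alpha> n + 1 \<le> k" "k \<le> cf_q \<alpha> n - 2"
  shows "(k0 > 0 \<and> even n \<longrightarrow> v_seq (cf_approx \<alpha> n) \<theta> k = v_seq \<alpha> \<theta> k)
       \<and> (k0 > 0 \<and> odd n \<longrightarrow> v_seq (cf_approx \<alpha> n) \<theta> k = vt_seq \<alpha> \<theta> k)
       \<and> (k0 < 0 \<and> even n \<longrightarrow> v_seq (cf_approx \<alpha> n) \<theta> k = vt_seq \<alpha> \<theta> k)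
       \<and> (k0 < 0 \<and> odd n \<longrightarrow> v_seq (cf_approx \<alpha> n) \<theta> k = v_seq \<alpha> \<theta> k)"
proof -
  have \<alpha>: "0 < \<alpha>" "\<alpha> < 1" using assms(1-3) by (auto simp: order_le_less)
  obtain N where n: "n = Suc N" using assms(4) by (cases n) auto
  interpret cf_tail "cf_p \<alpha> n" "cf_q \<alpha> n" "cf_p \<alpha> N" "cf_q \<alpha> N" "cf_rem \<alpha> n" \<alpha>
  proof
    show "0 < cf_q \<alpha> n" "0 < cf_q \<alpha> N" using cf_q_pos[OF assms(3) \<alpha>] by auto
    show "\<bar>cf_p \<alpha> n * cf_q \<alpha> N - cf_p \<alpha> N * cf_q \<alpha> n\<bar> = 1" using cf_det[of \<alpha> N] by (simp add: n)
    show "0 < cf_rem \<alpha> n" using cf_rem_bounds[OF assms(3) \<alpha>] by simp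
    show "\<alpha> = (cf_p \<alpha> n + cf_p \<alpha> N * cf_rem \<alpha> n) / (cf_q \<alpha> n + cf_q \<alpha> N * cf_rem \<alpha> n)"
      using cf_expansion[OF assms(3), of N] by (simp add: n)
  qed
  have "sgn (cf_approx \<alpha> n - \<alpha>) = (if odd n then 1 else -1)"
    using sgn_approx_diff cf_det[of \<alpha> N] by (simp add: cf_approx_def n)
  then have parity: "even n \<longleftrightarrow> cf_approx \<alpha> n < \<alpha>" "odd n \<longleftrightarrow> \<alpha> < cf_approx \<alpha> n"
    by (auto simp: sgn_if split: if_splits)
  have k: "\<bar>k\<bar> < cf_q \<alpha> n" "\<bar>k + 1\<bar> < cf_q \<alpha> n" "\<bar>k0\<bar> \<le> cf_q \<alpha> N"
    using assms(5,7,8) by (auto simp: n)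
  note v = v_seq_approx_eq_v_seq[OF assms(3,1,2) k(3) _ k(1,2)]
  note vt = v_seq_approx_eq_vt_seq[OF assms(3) \<alpha>(1) assms(2) k(3) _ k(1,2)]
  show ?thesis
    unfolding assms(6) v_seq_frac_shift vt_seq_frac_shift
    using v vt parity by (auto simp: cf_approx_def zero_less_mult_iff mult_less_0_iff)
qed

end
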